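(* Let $M$ be a globally hyperbolic developable conformally flat spacetime of dimension $n\ge3$ with developing map $D:M\to\widetilde{Ein}_{1,n-1}$. Then for every $p\in M$, $$I^-\big(D(I^-(p))\big)=I^-(D(p)),$$ where the left-hand side is the chronological past in $\widetilde{Ein}_{1,n-1}$ of the set $D(I^-(p))$.
   Context: $\widetilde{Ein}_{1,n-1}$ denotes the universal cover of the Einstein universe, conformally identified with $\mathbb{S}^{n-1}\times\mathbb{R}$ with the conformal class of $d\sigma^2-dt^2$, time-oriented by $\partial_t$. A conformally flat spacetime $M$ is developable if it admits a developing map: a conformal, time-orientation preserving local diffeomorphism $D:M\to\widetilde{Ein}_{1,n-1}$. *)

theory Defs
  imports "HOL-Analysis.Analysis"
begin

text \<open>Model of the universal cover of the Einstein universe: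
  S^{n-1} x R, with S^{n-1} the unit sphere of an n-dimensional Euclidean
  space 'a (n = DIM('a)), conformal class of d sigma^2 - dt^2,
  time orientation given by d/dt.\<close>

definition Ein :: "('a::euclidean_space \<times> real) set" where
  "Ein = {x. norm x = 1} \<times> UNIV"

definition Ein_top :: "('a::euclidean_space \<times> real) topology" where
  "Ein_top = subtopology euclidean Ein"

text \<open>Since x stays on the unit sphere, |x'| is the round-metric norm.\<close>

definition Ein_timelike_curve :: "(real \<Rightarrow> 'a::euclidean_space \<times> real) \<Rightarrow> bool" where
  "Ein_timelike_curve c \<longleftrightarrow>
     c ` {0..1} \<subseteq> Ein \<and> c piecewise_C1_differentiable_on {0..1} \<and>
     (\<exists>S. finite S \<and> c C1_differentiable_on ({0..1} - S) \<and>
        (\<forall>s\<in>{0..1} - S. norm (fst (vector_derivative c (at s)))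
                               < snd (vector_derivative c (at s))))"

definition Ein_causal_curve :: "(real \<Rightarrow> 'a::euclidean_space \<times> real) \<Rightarrow> bool" where
  "Ein_causal_curve c \<longleftrightarrow>
     c ` {0..1} \<subseteq> Ein \<and> c piecewise_C1_differentiable_on {0..1} \<and>
     (\<exists>S. finite S \<and> c C1_differentiable_on ({0..1} - S) \<and>
        (\<forall>s\<in>{0..1} - S. norm (fst (vector_derivative c (at s)))
                               \<le> snd (vector_derivative c (at s))
                         \<and> 0 < snd (vector_derivative c (at s))))"

definition Ein_chron_past :: "('a::euclidean_space \<times> real) set \<Rightarrow> ('a \<times> real) set" where
  "Ein_chron_past A = {y \<in> Ein. \<exists>a\<in>A. \<exists>c. Ein_timelike_curve c \<and> c 0 = y \<and> c 1 = a}"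

text \<open>The smooth structure, conformal Lorentzian structure and time
  orientation of M are exactly the pull-backs via D (D being a conformal,
  time-orientation preserving local diffeomorphism).\<close>

definition local_homeo_into :: "'m topology \<Rightarrow> ('m \<Rightarrow> 'b) \<Rightarrow> 'b topology \<Rightarrow> bool" where
  "local_homeo_into X D Y \<longleftrightarrow>
     D ` topspace X \<subseteq> topspace Y \<and>
     (\<forall>x\<in>topspace X. \<exists>U. openin X U \<and> x \<in> U \<and> openin Y (D ` U) \<and>
         homeomorphic_map (subtopology X U) (subtopology Y (D ` U)) D)"

definition developable_spacetime :: "'m topology \<Rightarrow> ('m \<Rightarrow> 'a::euclidean_space \<times> real) \<Rightarrow> bool" where
  "developable_spacetime X D \<longleftrightarrow>
     topspace X \<noteq> {} \<and> connected_space X \<and> Hausdorff_space X \<and> second_countable X \<and>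
     local_homeo_into X D Ein_top"

definition timelike_curve :: "'m topology \<Rightarrow> ('m \<Rightarrow> 'a::euclidean_space \<times> real) \<Rightarrow> (real \<Rightarrow> 'm) \<Rightarrow> bool" where
  "timelike_curve X D g \<longleftrightarrow>
     continuous_map (subtopology euclidean {0..1}) X g \<and> Ein_timelike_curve (D \<circ> g)"

definition causal_curve :: "'m topology \<Rightarrow> ('m \<Rightarrow> 'a::euclidean_space \<times> real) \<Rightarrow> (real \<Rightarrow> 'm) \<Rightarrow> bool" where
  "causal_curve X D g \<longleftrightarrow>
     continuous_map (subtopology euclidean {0..1}) X g \<and> Ein_causal_curve (D \<circ> g)"

definition chron_past :: "'m topology \<Rightarrow> ('m \<Rightarrow> 'a::euclidean_space \<times> real) \<Rightarrow> 'm \<Rightarrow> 'm set" where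
  "chron_past X D p = {q \<in> topspace X. \<exists>g. timelike_curve X D g \<and> g 0 = q \<and> g 1 = p}"

definition causal_future :: "'m topology \<Rightarrow> ('m \<Rightarrow> 'a::euclidean_space \<times> real) \<Rightarrow> 'm \<Rightarrow> 'm set" where
  "causal_future X D p = {q \<in> topspace X. q = p \<or> (\<exists>g. causal_curve X D g \<and> g 0 = p \<and> g 1 = q)}"

definition causal_past :: "'m topology \<Rightarrow> ('m \<Rightarrow> 'a::euclidean_space \<times> real) \<Rightarrow> 'm \<Rightarrow> 'm set" where
  "causal_past X D p = {q \<in> topspace X. q = p \<or> (\<exists>g. causal_curve X D g \<and> g 0 = q \<and> g 1 = p)}"

text \<open>Global hyperbolicity (Bernal--Sanchez form): causal (no closed causal
  curves) and all causal diamonds J^+(p) \<inter> J^-(q) compact.\<close>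
definition globally_hyperbolic :: "'m topology \<Rightarrow> ('m \<Rightarrow> 'a::euclidean_space \<times> real) \<Rightarrow> bool" where
  "globally_hyperbolic X D \<longleftrightarrow>
     (\<nexists>g. causal_curve X D g \<and> g 0 = g 1) \<and>
     (\<forall>p\<in>topspace X. \<forall>q\<in>topspace X. compactin X (causal_future X D p \<inter> causal_past X D q))"

end

theory Submission
  imports Defs
begin

text \<open>Concatenating timelike curves shows that the chronological past of D(I^-(p)) lies in
  that of D(p). Conversely, a timelike curve in the Einstein universe ending at D(p) has a
  final segment inside the image of a neighbourhood of p on which D is a homeomorphism;
  lifting that segment gives a point q of I^-(p), and the initial segment of the curve
  is a timelike curve ending at D(q).\<close>

text \<open>The timelike condition of Ein_timelike_curve phrased with has_vector_derivative
  instead of vector_derivative, so that it transfers along affine reparametrisations and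
  to curves agreeing on an open set.\<close>

definition timelike_velocities :: "(real \<Rightarrow> 'a::euclidean_space \<times> real) \<Rightarrow> bool" where
  "timelike_velocities c \<longleftrightarrow>
     (\<exists>S. finite S \<and>
        (\<forall>s\<in>{0..1} - S. \<exists>v. (c has_vector_derivative v) (at s) \<and> norm (fst v) < snd v))"

lemma Ein_timelike_curve_iff:
  "Ein_timelike_curve c \<longleftrightarrow>
     c ` {0..1} \<subseteq> Ein \<and> c piecewise_C1_differentiable_on {0..1} \<and> timelike_velocities c"
proof
  assume "Ein_timelike_curve c"
  then show "c ` {0..1} \<subseteq> Ein \<and> c piecewise_C1_differentiable_on {0..1} \<and> timelike_velocities c"
    unfolding Ein_timelike_curve_def timelike_velocities_def C1_differentiable_on_eq
    by (metis vector_derivative_works)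
next
  assume c: "c ` {0..1} \<subseteq> Ein \<and> c piecewise_C1_differentiable_on {0..1} \<and> timelike_velocities c"
  then obtain S0 where S0: "finite S0" "c C1_differentiable_on ({0..1} - S0)"
    unfolding piecewise_C1_differentiable_on_def by blast
  obtain S1 where S1: "finite S1"
    "\<And>s. s \<in> {0..1} - S1 \<Longrightarrow> \<exists>v. (c has_vector_derivative v) (at s) \<and> norm (fst v) < snd v"
    using c unfolding timelike_velocities_def by blast
  have "norm (fst (vector_derivative c (at s))) < snd (vector_derivative c (at s))"
    if "s \<in> {0..1} - (S0 \<union> S1)" for s
    using S1(2)[of s] that vector_derivative_at by fastforce
  moreover have "c C1_differentiable_on ({0..1} - (S0 \<union> S1))"
    by (rule C1_differentiable_on_subset[OF S0(2)]) auto
  ultimately show "Ein_timelike_curve c"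
    unfolding Ein_timelike_curve_def using c S0(1) S1(1) by (metis finite_Un)
qed

lemma timelike_derivative_affine_reparam:
  fixes c :: "real \<Rightarrow> 'a::euclidean_space \<times> real"
  assumes "(c has_vector_derivative v) (at (m * s + b))" "norm (fst v) < snd v" "0 < m"
    and "open J" "s \<in> J" "\<And>x. x \<in> J \<Longrightarrow> d x = c (m * x + b)"
  shows "\<exists>w. (d has_vector_derivative w) (at s) \<and> norm (fst w) < snd w"
proof (intro exI conjI)
  have "((\<lambda>x. m * x + b) has_vector_derivative m) (at s)"
    unfolding has_real_derivative_iff_has_vector_derivative[symmetric]
    by (auto intro!: derivative_eq_intros)
  from vector_diff_chain_at[OF this assms(1)]
  have "((\<lambda>x. c (m * x + b)) has_vector_derivative m *\<^sub>R v) (at s)"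
    by (simp add: o_def)
  then show "(d has_vector_derivative m *\<^sub>R v) (at s)"
    by (rule has_vector_derivative_transform_within_open) (use assms(4-6) in auto)
  show "norm (fst (m *\<^sub>R v)) < snd (m *\<^sub>R v)"
    using assms(2,3) by simp
qed

lemma timelike_velocities_affine_reparam:
  assumes "timelike_velocities c" "0 < m" "open J"
    and "\<And>x. x \<in> J \<Longrightarrow> d x = c (m * x + b) \<and> m * x + b \<in> {0..1}"
  obtains S where "finite S"
    "\<And>s. s \<in> J - S \<Longrightarrow> \<exists>w. (d has_vector_derivative w) (at s) \<and> norm (fst w) < snd w"
proof -
  obtain T where T: "finite T"
    "\<And>s. s \<in> {0..1} - T \<Longrightarrow> \<exists>v. (c has_vector_derivative v) (at s) \<and> norm (fst v) < snd v"
    using assms(1) unfolding timelike_velocities_def by blast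
  show thesis
  proof (rule that)
    show "finite ((\<lambda>y. (y - b) / m) ` T)"
      using T(1) by blast
    fix s assume s: "s \<in> J - (\<lambda>y. (y - b) / m) ` T"
    have "m * s + b \<notin> T"
    proof
      assume "m * s + b \<in> T"
      then have "(m * s + b - b) / m \<in> (\<lambda>y. (y - b) / m) ` T" by blast
      then show False using s assms(2) by simp
    qed
    then obtain v where "(c has_vector_derivative v) (at (m * s + b))" "norm (fst v) < snd v"
      using T(2) assms(4) s by blast
    then show "\<exists>w. (d has_vector_derivative w) (at s) \<and> norm (fst w) < snd w"
      using timelike_derivative_affine_reparam assms(2-4) s by blast
  qed
qed

lemma timelike_velocities_join:
  assumes "timelike_velocities c1" "timelike_velocities c2"
  shows "timelike_velocities (c1 +++ c2)"
proof -
  obtain S1 where S1: "finite S1" "\<And>s. s \<in> {0<..<1/2} - S1 \<Longrightarrow>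
      \<exists>w. ((c1 +++ c2) has_vector_derivative w) (at s) \<and> norm (fst w) < snd w"
    by (rule timelike_velocities_affine_reparam[OF assms(1), of 2 "{0<..<1/2}" "c1 +++ c2" 0])
       (auto simp: joinpaths_def)
  obtain S2 where S2: "finite S2" "\<And>s. s \<in> {1/2<..<1} - S2 \<Longrightarrow>
      \<exists>w. ((c1 +++ c2) has_vector_derivative w) (at s) \<and> norm (fst w) < snd w"
    by (rule timelike_velocities_affine_reparam[OF assms(2), of 2 "{1/2<..<1}" "c1 +++ c2" "-1"])
       (auto simp: joinpaths_def)
  have "{0..1} - (S1 \<union> S2 \<union> {0, 1/2, 1}) \<subseteq> ({0<..<1/2} - S1) \<union> ({1/2<..<1} - S2)"
    by auto
  then show ?thesis
    unfolding timelike_velocities_def using S1 S2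
    by (intro exI[of _ "S1 \<union> S2 \<union> {0, 1/2, 1}"]) blast
qed

lemma timelike_velocities_subpath:
  assumes "timelike_velocities c" "0 \<le> u" "u < w" "w \<le> 1"
  shows "timelike_velocities (subpath u w c)"
proof -
  have param: "(w - u) * x + u \<in> {0..1}" if "x \<in> {0<..<1}" for x
  proof -
    have "(w - u) * x \<le> w - u"
      using that assms by (intro mult_left_le) auto
    moreover have "0 \<le> (w - u) * x"
      using that assms by simp
    ultimately show ?thesis
      unfolding atLeastAtMost_iff using assms by (intro conjI; linarith)
  qed
  obtain S where S: "finite S" "\<And>s. s \<in> {0<..<1} - S \<Longrightarrow>
      \<exists>v. (subpath u w c has_vector_derivative v) (at s) \<and> norm (fst v) < snd v"
    by (rule timelike_velocities_affine_reparam[OF assms(1), of "w - u" "{0<..<1}" _ u])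
       (use assms param in \<open>auto simp: subpath_def\<close>)
  then show ?thesis
    unfolding timelike_velocities_def by (intro exI[of _ "S \<union> {0, 1}"]) auto
qed

lemma piecewise_C1_differentiable_on_cong:
  assumes "f piecewise_C1_differentiable_on S" "\<And>x. x \<in> S \<Longrightarrow> g x = f x"
    and "finite (S - interior S)"
  shows "g piecewise_C1_differentiable_on S"
proof -
  obtain T where T: "finite T" "f C1_differentiable_on (S - T)"
    using assms(1) unfolding piecewise_C1_differentiable_on_def by blast
  then obtain f' where f': "\<And>x. x \<in> S - T \<Longrightarrow> (f has_vector_derivative f' x) (at x)"
    "continuous_on (S - T) f'"
    unfolding C1_differentiable_on_def by blast
  have f_eq_g: "f y = g y" if "y \<in> interior S" for y
    using assms(2) interior_subset that by (metis subsetD)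
  have "(g has_vector_derivative f' x) (at x)" if "x \<in> S - (T \<union> (S - interior S))" for x
    by (rule has_vector_derivative_transform_within_open[OF f'(1), of x "interior S"])
       (use that f_eq_g in auto)
  moreover have "continuous_on (S - (T \<union> (S - interior S))) f'"
    by (rule continuous_on_subset[OF f'(2)]) auto
  ultimately have "g C1_differentiable_on (S - (T \<union> (S - interior S)))"
    unfolding C1_differentiable_on_def by blast
  moreover have "continuous_on S g"
    using assms(1,2) continuous_on_cong piecewise_C1_differentiable_on_def by metis
  ultimately show ?thesis
    unfolding piecewise_C1_differentiable_on_def using T(1) assms(3) by blast
qed

lemma Ein_timelike_curve_cong:
  assumes "Ein_timelike_curve c" "\<And>s. s \<in> {0..1} \<Longrightarrow> d s = c s"
  shows "Ein_timelike_curve d"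
proof -
  have "timelike_velocities c" "c piecewise_C1_differentiable_on {0..1}" "c ` {0..1} \<subseteq> Ein"
    using assms(1) unfolding Ein_timelike_curve_iff by auto
  moreover obtain S where "finite S" "\<And>s. s \<in> {0<..<1} - S \<Longrightarrow>
      \<exists>v. (d has_vector_derivative v) (at s) \<and> norm (fst v) < snd v"
    by (rule timelike_velocities_affine_reparam[OF \<open>timelike_velocities c\<close>, of 1 "{0<..<1}" d 0])
       (use assms(2) in auto)
  then have "timelike_velocities d"
    unfolding timelike_velocities_def by (intro exI[of _ "S \<union> {0, 1}"]) auto
  moreover have "d piecewise_C1_differentiable_on {0..1}"
    by (rule piecewise_C1_differentiable_on_cong[OF _ assms(2)]) (use calculation in auto)
  ultimately show ?thesis
    unfolding Ein_timelike_curve_iff using assms(2) by auto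
qed

lemma Ein_timelike_curve_join:
  assumes "Ein_timelike_curve c1" "Ein_timelike_curve c2" "c1 1 = c2 0"
  shows "Ein_timelike_curve (c1 +++ c2)"
  using assms path_image_join_subset[of c1 c2] valid_path_join[of c1 c2] timelike_velocities_join
  unfolding Ein_timelike_curve_iff valid_path_def path_image_def pathfinish_def pathstart_def
  by blast

lemma Ein_timelike_curve_subpath:
  assumes "Ein_timelike_curve c" "0 \<le> u" "u < w" "w \<le> 1"
  shows "Ein_timelike_curve (subpath u w c)"
  using assms path_image_subpath_subset[of u w c] valid_path_subpath[of c u w]
    timelike_velocities_subpath[of c u w]
  unfolding Ein_timelike_curve_iff valid_path_def path_image_def
  by auto

lemma Ein_chron_past_trans:
  assumes "A \<subseteq> Ein_chron_past B"
  shows "Ein_chron_past A \<subseteq> Ein_chron_past B"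
proof
  fix y assume "y \<in> Ein_chron_past A"
  then obtain a c where "y \<in> Ein" "a \<in> A" "Ein_timelike_curve c" "c 0 = y" "c 1 = a"
    unfolding Ein_chron_past_def by blast
  moreover obtain b c' where "b \<in> B" "Ein_timelike_curve c'" "c' 0 = a" "c' 1 = b"
    using assms \<open>a \<in> A\<close> unfolding Ein_chron_past_def by blast
  ultimately show "y \<in> Ein_chron_past B"
    unfolding Ein_chron_past_def
    by (intro CollectI conjI bexI[of _ b] exI[of _ "c +++ c'"] Ein_timelike_curve_join)
       (auto simp: joinpaths_def)
qed

lemma image_chron_past_subset_Ein_chron_past:
  "D ` chron_past X D p \<subseteq> Ein_chron_past {D p}"
proof
  fix z assume "z \<in> D ` chron_past X D p"
  then obtain g where "timelike_curve X D g" "D (g 0) = z" "g 1 = p"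
    unfolding chron_past_def by blast
  then have "Ein_timelike_curve (D \<circ> g)" "D (g 0) \<in> Ein"
    unfolding timelike_curve_def Ein_timelike_curve_def by auto
  then show "z \<in> Ein_chron_past {D p}"
    unfolding Ein_chron_past_def using \<open>D (g 0) = z\<close> \<open>g 1 = p\<close> by auto
qed

lemma path_final_segment_in_open:
  assumes "continuous_on {0..1} c" "open T" "c 1 \<in> T"
  obtains a :: real where "0 < a" "a < 1" "c ` {a..1} \<subseteq> T"
proof -
  obtain A where A: "open A" "A \<inter> {0..1} = c -` T \<inter> {0..1}"
    using assms(1,2) unfolding continuous_on_open_invariant by blast
  then have "1 \<in> A" using assms(3) by auto
  then obtain e where e: "e > 0" "ball 1 e \<subseteq> A"
    using A(1) openE by blast
  define a where "a = max (1/2) (1 - e/2)"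
  have "c s \<in> T" if "s \<in> {a..1}" for s
  proof -
    have "s \<in> ball 1 e" "s \<in> {0..1}"
      using that e(1) by (auto simp: a_def dist_real_def)
    then show ?thesis using e(2) A(2) by blast
  qed
  moreover have "0 < a" "a < 1"
    using e(1) by (auto simp: a_def)
  ultimately show thesis
    using that by blast
qed

lemma timelike_curve_lift:
  assumes "U \<subseteq> topspace X"
    and "homeomorphic_map (subtopology X U) (subtopology Ein_top (D ` U)) D"
    and "Ein_timelike_curve \<gamma>" "\<gamma> ` {0..1} \<subseteq> D ` U"
  obtains g where "timelike_curve X D g" "g ` {0..1} \<subseteq> U" "\<And>s. s \<in> {0..1} \<Longrightarrow> D (g s) = \<gamma> s"
proof -
  obtain h where h: "homeomorphic_maps (subtopology X U) (subtopology Ein_top (D ` U)) D h"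
    using assms(2) homeomorphic_map_maps by blast
  have top_DU: "topspace (subtopology Ein_top (D ` U)) = Ein \<inter> D ` U"
    unfolding Ein_top_def by auto
  have \<gamma>_Ein: "\<gamma> ` {0..1} \<subseteq> Ein" and \<gamma>_cont: "continuous_on {0..1} \<gamma>"
    using assms(3) unfolding Ein_timelike_curve_def piecewise_C1_differentiable_on_def by auto
  have "continuous_map (subtopology euclidean {0..1}) (subtopology Ein_top (D ` U)) \<gamma>"
    unfolding Ein_top_def subtopology_subtopology continuous_map_in_subtopology
    using \<gamma>_cont \<gamma>_Ein assms(4) by (auto simp: continuous_map_iff_continuous)
  then have h\<gamma>: "continuous_map (subtopology euclidean {0..1}) (subtopology X U) (h \<circ> \<gamma>)"
    using h continuous_map_compose unfolding homeomorphic_maps_def by blast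
  have D_h\<gamma>: "D (h (\<gamma> s)) = \<gamma> s" if "s \<in> {0..1}" for s
  proof -
    have "\<gamma> s \<in> topspace (subtopology Ein_top (D ` U))"
      using that \<gamma>_Ein assms(4) top_DU by auto
    then show ?thesis
      using h unfolding homeomorphic_maps_def by simp
  qed
  show thesis
  proof
    have "Ein_timelike_curve (D \<circ> (h \<circ> \<gamma>))"
      by (rule Ein_timelike_curve_cong[OF assms(3)]) (simp add: D_h\<gamma>)
    then show "timelike_curve X D (h \<circ> \<gamma>)"
      unfolding timelike_curve_def using h\<gamma> continuous_map_into_fulltopology by blast
    show "(h \<circ> \<gamma>) ` {0..1} \<subseteq> U"
      using continuous_map_image_subset_topspace[OF h\<gamma>] assms(1) by auto
  qed (simp add: D_h\<gamma>)
qed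

lemma Ein_chron_past_subset_image_chron_past:
  assumes "local_homeo_into X D Ein_top" "p \<in> topspace X"
  shows "Ein_chron_past {D p} \<subseteq> Ein_chron_past (D ` chron_past X D p)"
proof
  fix y assume "y \<in> Ein_chron_past {D p}"
  then obtain c where y: "y \<in> Ein" and c: "Ein_timelike_curve c" "c 0 = y" "c 1 = D p"
    unfolding Ein_chron_past_def by blast
  obtain U where U: "openin X U" "p \<in> U" "openin Ein_top (D ` U)"
    "homeomorphic_map (subtopology X U) (subtopology Ein_top (D ` U)) D"
    using assms unfolding local_homeo_into_def by blast
  obtain T where T: "open T" "D ` U = T \<inter> Ein"
    using U(3) unfolding Ein_top_def openin_subtopology by auto
  have c_Ein: "c ` {0..1} \<subseteq> Ein" and "continuous_on {0..1} c"
    using c(1) unfolding Ein_timelike_curve_def piecewise_C1_differentiable_on_def by auto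
  then obtain a where a: "0 < a" "a < 1" "c ` {a..1} \<subseteq> T"
    using path_final_segment_in_open T(1) T(2) U(2) c(3) by (metis IntD1 imageI)
  have "subpath a 1 c ` {0..1} \<subseteq> D ` U"
    using a c_Ein T(2) path_image_subpath[of a 1 c] unfolding path_image_def by auto
  moreover have "Ein_timelike_curve (subpath a 1 c)"
    using Ein_timelike_curve_subpath[OF c(1)] a by simp
  ultimately obtain g where g: "timelike_curve X D g" "g ` {0..1} \<subseteq> U"
    "\<And>s. s \<in> {0..1} \<Longrightarrow> D (g s) = subpath a 1 c s"
    using timelike_curve_lift[OF openin_subset[OF U(1)] U(4)] by blast
  have "inj_on D U"
    using homeomorphic_imp_injective_map[OF U(4)]
    by (simp add: Int_absorb1[OF openin_subset[OF U(1)]])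
  moreover have "g 1 \<in> U" "D (g 1) = D p"
    using g(2) g(3)[of 1] c(3) by (auto simp: subpath_def)
  ultimately have "g 1 = p"
    using U(2) by (auto dest: inj_onD)
  moreover have "g 0 \<in> topspace X"
    using g(2) openin_subset[OF U(1)] by (simp add: image_subset_iff subset_iff)
  ultimately have "g 0 \<in> chron_past X D p"
    using g(1) unfolding chron_past_def by auto
  moreover have "D (g 0) = c a"
    using g(3)[of 0] by (simp add: subpath_def)
  ultimately have "c a \<in> D ` chron_past X D p"
    by (metis image_eqI)
  moreover have "Ein_timelike_curve (subpath 0 a c)"
    using Ein_timelike_curve_subpath[OF c(1)] a by auto
  ultimately show "y \<in> Ein_chron_past (D ` chron_past X D p)"
    unfolding Ein_chron_past_def using y c(2) by (force simp: subpath_def)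
qed

theorem lemma4p2:
  fixes X :: "'m topology" and D :: "'m \<Rightarrow> 'a::euclidean_space \<times> real"
  assumes "DIM('a) \<ge> 3"
    and "developable_spacetime X D"
    and "globally_hyperbolic X D"
    and "p \<in> topspace X"
  shows "Ein_chron_past (D ` chron_past X D p) = Ein_chron_past {D p}"
proof
  show "Ein_chron_past (D ` chron_past X D p) \<subseteq> Ein_chron_past {D p}"
    by (rule Ein_chron_past_trans[OF image_chron_past_subset_Ein_chron_past])
  show "Ein_chron_past {D p} \<subseteq> Ein_chron_past (D ` chron_past X D p)"
    by (rule Ein_chron_past_subset_image_chron_past)
       (use assms(2,4) in \<open>auto simp: developable_spacetime_def\<close>)
qed

end
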